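(* For every positive integer $n$, the order supergraph $\mathcal{S}(S_n)$ of the symmetric group $S_n$ is cyclically separable if and only if $n \geq 4$.
   Context: All graphs are simple and undirected. For a finite group $G$, the order supergraph $\mathcal{S}(G)$ is the graph with vertex set $G$ in which two distinct vertices $x,y$ are adjacent if and only if the order of $x$ divides the order of $y$ or the order of $y$ divides the order of $x$. For a graph $\Gamma$, a vertex cutset is a set $S$ of vertices such that $\Gamma - S$ is disconnected; a cyclic vertex cutset is a vertex cutset $S$ such that $\Gamma - S$ has at least two connected components each of which contains a cycle. $\Gamma$ is called cyclically separable if it has a cyclic vertex cutset. *)

theory Defs
  imports "HOL-Algebra.Sym_Groups" "HOL-Algebra.Multiplicative_Group"
begin

text \<open>A simple undirected graph is given by a vertex set V and a symmetric,
irreflexive adjacency predicate E (only its values on V matter).\<close>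

definition adj_in :: "'a set \<Rightarrow> ('a \<Rightarrow> 'a \<Rightarrow> bool) \<Rightarrow> 'a \<Rightarrow> 'a \<Rightarrow> bool" where
  "adj_in U E x y \<longleftrightarrow> x \<in> U \<and> y \<in> U \<and> E x y"

definition component_of :: "'a set \<Rightarrow> ('a \<Rightarrow> 'a \<Rightarrow> bool) \<Rightarrow> 'a \<Rightarrow> 'a set" where
  "component_of U E x = {y. (adj_in U E)\<^sup>*\<^sup>* x y}"

definition components :: "'a set \<Rightarrow> ('a \<Rightarrow> 'a \<Rightarrow> bool) \<Rightarrow> 'a set set" where
  "components U E = component_of U E ` U"

definition has_cycle_in :: "'a set \<Rightarrow> ('a \<Rightarrow> 'a \<Rightarrow> bool) \<Rightarrow> bool" where
  "has_cycle_in C E \<longleftrightarrow> (\<exists>xs. length xs \<ge> 3 \<and> distinct xs \<and> set xs \<subseteq> C \<and>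
      (\<forall>i < length xs. E (xs ! i) (xs ! ((i + 1) mod length xs))))"

definition vertex_cutset :: "'a set \<Rightarrow> ('a \<Rightarrow> 'a \<Rightarrow> bool) \<Rightarrow> 'a set \<Rightarrow> bool" where
  "vertex_cutset V E S \<longleftrightarrow> S \<subseteq> V \<and> (\<exists>C1 C2. C1 \<in> components (V - S) E \<and>
      C2 \<in> components (V - S) E \<and> C1 \<noteq> C2)"

definition cyclic_vertex_cutset :: "'a set \<Rightarrow> ('a \<Rightarrow> 'a \<Rightarrow> bool) \<Rightarrow> 'a set \<Rightarrow> bool" where
  "cyclic_vertex_cutset V E S \<longleftrightarrow> vertex_cutset V E S \<and>
     (\<exists>C1 C2. C1 \<in> components (V - S) E \<and> C2 \<in> components (V - S) E \<and> C1 \<noteq> C2 \<and>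
        has_cycle_in C1 E \<and> has_cycle_in C2 E)"

definition cyclically_separable :: "'a set \<Rightarrow> ('a \<Rightarrow> 'a \<Rightarrow> bool) \<Rightarrow> bool" where
  "cyclically_separable V E \<longleftrightarrow> (\<exists>S. cyclic_vertex_cutset V E S)"

definition order_supergraph_adj :: "('a, 'b) monoid_scheme \<Rightarrow> 'a \<Rightarrow> 'a \<Rightarrow> bool" where
  "order_supergraph_adj G x y \<longleftrightarrow> x \<noteq> y \<and>
     (group.ord G x dvd group.ord G y \<or> group.ord G y dvd group.ord G x)"

end

theory Submission
  imports Defs "HOL-Computational_Algebra.Primes"
begin

text \<open>The identity has order 1, so it is adjacent to every other vertex of the order
  supergraph. A cutset missing it therefore leaves a single component, and a cutset containing
  it leaves fewer than |G| vertices, too few for two disjoint components carrying cycles (three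
  vertices each) when |G| \<le> 6, i.e. n \<le> 3. For n \<ge> 4 delete every element whose order is
  neither 2 nor 3: no involution is adjacent to an element of order 3, so both kinds lie in
  different components, and elements of equal order form cliques, which contain triangles
  (three transpositions, three 3-cycles).\<close>

lemma component_of_subset: "x \<in> U \<Longrightarrow> component_of U E x \<subseteq> U"
proof
  fix y assume "x \<in> U" and "y \<in> component_of U E x"
  from \<open>y \<in> component_of U E x\<close> have "(adj_in U E)\<^sup>*\<^sup>* x y"
    by (simp add: component_of_def)
  then show "y \<in> U"
    using \<open>x \<in> U\<close> by (induction rule: rtranclp_induct) (auto simp: adj_in_def)
qed

lemma components_subset: "C \<in> components U E \<Longrightarrow> C \<subseteq> U"
  by (auto simp: components_def dest: component_of_subset)

lemma component_of_invariant:
  assumes step: "\<And>x y. adj_in U E x y \<Longrightarrow> P x \<Longrightarrow> P y"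
    and "P x" and "y \<in> component_of U E x"
  shows "P y"
proof -
  from \<open>y \<in> component_of U E x\<close> have "(adj_in U E)\<^sup>*\<^sup>* x y"
    by (simp add: component_of_def)
  then show ?thesis
    using \<open>P x\<close> by (induction rule: rtranclp_induct) (auto intro: step)
qed

lemma component_of_eq:
  assumes "symp E" and "y \<in> component_of U E x"
  shows "component_of U E y = component_of U E x"
proof -
  have "symp (adj_in U E)"
    using \<open>symp E\<close> by (auto simp: adj_in_def intro!: sympI dest: sympD)
  then have "symp (adj_in U E)\<^sup>*\<^sup>*"
    by (rule symp_rtranclp)
  moreover have xy: "(adj_in U E)\<^sup>*\<^sup>* x y"
    using assms(2) by (simp add: component_of_def)
  ultimately have yx: "(adj_in U E)\<^sup>*\<^sup>* y x"
    by (rule sympD)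
  show ?thesis
    unfolding component_of_def using xy yx by (auto intro: rtranclp_trans)
qed

lemma components_disjoint:
  assumes "symp E" and "C1 \<in> components U E" "C2 \<in> components U E" "C1 \<noteq> C2"
  shows "C1 \<inter> C2 = {}"
proof (rule ccontr)
  assume "C1 \<inter> C2 \<noteq> {}"
  then obtain z where "z \<in> C1" "z \<in> C2" by blast
  obtain x1 x2 where "C1 = component_of U E x1" "C2 = component_of U E x2"
    using assms(2,3) by (auto simp: components_def)
  with \<open>z \<in> C1\<close> \<open>z \<in> C2\<close> have "C1 = component_of U E z" "C2 = component_of U E z"
    using component_of_eq[OF \<open>symp E\<close>, of z U x1] component_of_eq[OF \<open>symp E\<close>, of z U x2]
    by simp_all
  with \<open>C1 \<noteq> C2\<close> show False
    by simp
qed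

lemma components_eq_singleton_if_dominating:
  assumes "symp E" and "u \<in> U" and dom: "\<And>v. v \<in> U \<Longrightarrow> v \<noteq> u \<Longrightarrow> E u v"
  shows "components U E = {component_of U E u}"
proof -
  have mem: "v \<in> component_of U E u" if "v \<in> U" for v
  proof (cases "v = u")
    case False
    with that \<open>u \<in> U\<close> have "adj_in U E u v"
      by (simp add: adj_in_def dom)
    then show ?thesis
      by (simp add: component_of_def)
  qed (simp add: component_of_def)
  have "component_of U E v = component_of U E u" if "v \<in> U" for v
    by (rule component_of_eq[OF \<open>symp E\<close> mem[OF that]])
  then show ?thesis
    unfolding components_def using \<open>u \<in> U\<close> by blast
qed

lemma card_ge_3_if_has_cycle_in:
  assumes "has_cycle_in C E" and "finite C"
  shows "3 \<le> card C"
proof -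
  obtain xs where "3 \<le> length xs" "distinct xs" "set xs \<subseteq> C"
    using assms(1) unfolding has_cycle_in_def by blast
  then have "length xs \<le> card C"
    using card_mono[OF \<open>finite C\<close>] by (metis distinct_card)
  with \<open>3 \<le> length xs\<close> show ?thesis
    by simp
qed

lemma has_cycle_in_component_of_triangle:
  assumes "distinct [a, b, c]" "a \<in> U" "b \<in> U" "c \<in> U" "E a b" "E b c" "E c a"
  shows "has_cycle_in (component_of U E a) E"
proof -
  have "(adj_in U E)\<^sup>*\<^sup>* a b" "(adj_in U E)\<^sup>*\<^sup>* b c"
    using assms by (auto simp: adj_in_def)
  then have "set [a, b, c] \<subseteq> component_of U E a"
    by (auto simp: component_of_def)
  moreover have "E ([a, b, c] ! i) ([a, b, c] ! ((i + 1) mod 3))" if "i < 3" for i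
  proof -
    from \<open>i < 3\<close> consider "i = 0" | "i = 1" | "i = 2"
      by linarith
    then show ?thesis
      using assms(5-7) by cases simp_all
  qed
  ultimately show ?thesis
    unfolding has_cycle_in_def using assms(1) by (intro exI[of _ "[a, b, c]"]) auto
qed

lemma has_cycle_in_component_of_clique:
  assumes "3 \<le> card T" "T \<subseteq> U"
    and clique: "\<And>x y. x \<in> T \<Longrightarrow> y \<in> T \<Longrightarrow> x \<noteq> y \<Longrightarrow> E x y"
  obtains a where "a \<in> T" "has_cycle_in (component_of U E a) E"
proof -
  obtain T' where "T' \<subseteq> T" "card T' = 3"
    using obtain_subset_with_card_n[OF assms(1)] by metis
  then obtain a b c where abc: "T' = {a, b, c}" "a \<noteq> b" "b \<noteq> c" "a \<noteq> c"
    unfolding card_3_iff by blast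
  with \<open>T' \<subseteq> T\<close> have "a \<in> T" "b \<in> T" "c \<in> T"
    by auto
  then have "has_cycle_in (component_of U E a) E"
    using \<open>T \<subseteq> U\<close> abc clique[of a b] clique[of b c] clique[of c a]
    by (intro has_cycle_in_component_of_triangle) auto
  with \<open>a \<in> T\<close> show ?thesis
    by (rule that)
qed

lemma not_cyclically_separable_if_dominating:
  assumes "symp E" "finite V" "card V \<le> 6" "u \<in> V"
    and dom: "\<And>v. v \<in> V \<Longrightarrow> v \<noteq> u \<Longrightarrow> E u v"
  shows "\<not> cyclically_separable V E"
proof
  assume "cyclically_separable V E"
  then obtain S C1 C2 where
    C: "C1 \<in> components (V - S) E" "C2 \<in> components (V - S) E"
    "C1 \<noteq> C2" "has_cycle_in C1 E" "has_cycle_in C2 E"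
    by (auto simp: cyclically_separable_def cyclic_vertex_cutset_def vertex_cutset_def)
  show False
  proof (cases "u \<in> S")
    case True
    have sub: "C1 \<subseteq> V - {u}" "C2 \<subseteq> V - {u}"
      using C(1,2) True by (auto dest: components_subset)
    then have fin: "finite C1" "finite C2"
      using \<open>finite V\<close> by (auto intro: finite_subset)
    have "card C1 + card C2 = card (C1 \<union> C2)"
      using components_disjoint[OF \<open>symp E\<close> C(1-3)] fin by (simp add: card_Un_disjoint)
    also have "\<dots> \<le> card (V - {u})"
      using sub \<open>finite V\<close> by (intro card_mono) auto
    finally show False
      using card_ge_3_if_has_cycle_in[OF C(4) fin(1)] card_ge_3_if_has_cycle_in[OF C(5) fin(2)]
        \<open>card V \<le> 6\<close> \<open>u \<in> V\<close> \<open>finite V\<close> by simp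
  next
    case False
    then have "components (V - S) E = {component_of (V - S) E u}"
      using \<open>u \<in> V\<close> dom by (intro components_eq_singleton_if_dominating[OF \<open>symp E\<close>]) auto
    then show False
      using C(1-3) by simp
  qed
qed

lemma symp_order_supergraph_adj: "symp (order_supergraph_adj G)"
  by (auto simp: order_supergraph_adj_def intro: sympI)

lemma order_supergraph_adj_one:
  "group G \<Longrightarrow> x \<noteq> \<one>\<^bsub>G\<^esub> \<Longrightarrow> order_supergraph_adj G \<one>\<^bsub>G\<^esub> x"
  by (simp add: order_supergraph_adj_def group.ord_id)

lemma order_supergraph_not_cyclically_separable:
  assumes "group G" "finite (carrier G)" "card (carrier G) \<le> 6"
  shows "\<not> cyclically_separable (carrier G) (order_supergraph_adj G)"
  using assms order_supergraph_adj_one[OF \<open>group G\<close>]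
  by (intro not_cyclically_separable_if_dominating symp_order_supergraph_adj)
    (auto intro: monoid.one_closed group.is_monoid)

lemma order_supergraph_cyclically_separable:
  assumes "group G" "\<not> p dvd q" "\<not> q dvd p"
    and "3 \<le> card {x \<in> carrier G. group.ord G x = p}"
    and "3 \<le> card {x \<in> carrier G. group.ord G x = q}"
  shows "cyclically_separable (carrier G) (order_supergraph_adj G)"
proof -
  let ?E = "order_supergraph_adj G"
  define S where "S = {x \<in> carrier G. group.ord G x \<noteq> p \<and> group.ord G x \<noteq> q}"
  define U where "U = carrier G - S"
  have clique: "?E x y" if "group.ord G x = group.ord G y" "x \<noteq> y" for x y
    using that by (simp add: order_supergraph_adj_def)
  obtain a where "a \<in> carrier G" "group.ord G a = p"
    and cyc_a: "has_cycle_in (component_of U ?E a) ?E"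
    using has_cycle_in_component_of_clique[OF assms(4), of U ?E] clique by (auto simp: U_def S_def)
  obtain b where "b \<in> carrier G" "group.ord G b = q"
    and cyc_b: "has_cycle_in (component_of U ?E b) ?E"
    using has_cycle_in_component_of_clique[OF assms(5), of U ?E] clique by (auto simp: U_def S_def)
  have "group.ord G y = p" if "adj_in U ?E x y" "group.ord G x = p" for x y
    using that assms(2,3) by (auto simp: adj_in_def order_supergraph_adj_def U_def S_def)
  then have "b \<notin> component_of U ?E a"
    using component_of_invariant[of U ?E "\<lambda>x. group.ord G x = p" a b]
      \<open>group.ord G a = p\<close> \<open>group.ord G b = q\<close> assms(2)
    by auto
  moreover have "b \<in> component_of U ?E b"
    by (simp add: component_of_def)
  moreover have "component_of U ?E a \<in> components U ?E" "component_of U ?E b \<in> components U ?E"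
    using \<open>a \<in> carrier G\<close> \<open>b \<in> carrier G\<close> \<open>group.ord G a = p\<close> \<open>group.ord G b = q\<close>
    by (auto simp: components_def U_def S_def)
  ultimately have "cyclic_vertex_cutset (carrier G) ?E S"
    unfolding cyclic_vertex_cutset_def vertex_cutset_def U_def[symmetric]
    using cyc_a cyc_b by (auto simp: S_def)
  then show ?thesis
    by (auto simp: cyclically_separable_def)
qed

lemma (in group) ord_eq_prime:
  assumes "x \<in> carrier G" "prime p" "x [^] p = \<one>" "x \<noteq> \<one>"
  shows "ord x = p"
proof -
  have "ord x dvd p"
    using pow_eq_id[OF assms(1)] assms(3) by simp
  moreover have "ord x \<noteq> 1"
    using ord_eq_1[OF assms(1)] assms(4) by simp
  ultimately show ?thesis
    using \<open>prime p\<close> by (auto simp: prime_nat_iff)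
qed

lemma sym_group_pow: "x [^]\<^bsub>sym_group n\<^esub> (k :: nat) = x ^^ k"
  by (induction k) (simp_all add: sym_group_mult sym_group_one fun_eq_iff funpow_swap1)

lemma sym_group_ord_cycle_of_list:
  assumes "cycle cs" "prime (length cs)" "set cs \<subseteq> {1..n}"
  shows "group.ord (sym_group n) (cycle_of_list cs) = length cs"
proof -
  have carrier: "cycle_of_list cs \<in> carrier (sym_group n)"
    using permutes_subset[OF cycle_permutes assms(3)] by (simp add: sym_group_carrier)
  obtain a b rest where cs: "cs = a # b # rest"
    using prime_ge_2_nat[OF assms(2)] by (cases cs rule: cycle_of_list.cases) auto
  have "map (cycle_of_list cs) cs = rotate1 cs"
    using cyclic_rotation[OF assms(1), of 1] by simp
  then have "cycle_of_list cs a = b"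
    by (simp add: cs)
  moreover have "a \<noteq> b"
    using assms(1) cs by simp
  ultimately have "cycle_of_list cs \<noteq> \<one>\<^bsub>sym_group n\<^esub>"
    unfolding sym_group_one by (metis id_apply)
  moreover have "cycle_of_list cs [^]\<^bsub>sym_group n\<^esub> length cs = \<one>\<^bsub>sym_group n\<^esub>"
    unfolding sym_group_pow sym_group_one by (rule cycle_is_id_root[OF assms(1)])
  ultimately show ?thesis
    by (intro group.ord_eq_prime[OF sym_group_is_group carrier assms(2)])
qed

lemma finite_carrier_sym_group: "finite (carrier (sym_group n))"
  by (simp add: sym_group_def finite_permutations)

lemma card_le_card_sym_group_elements_of_order:
  assumes "prime p" "inj_on cycle_of_list Cs"
    and "\<And>cs. cs \<in> Cs \<Longrightarrow> cycle cs \<and> length cs = p \<and> set cs \<subseteq> {1..n}"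
  shows "card Cs \<le> card {x \<in> carrier (sym_group n). group.ord (sym_group n) x = p}"
proof -
  let ?P = "{x \<in> carrier (sym_group n). group.ord (sym_group n) x = p}"
  have "cycle_of_list cs \<in> ?P" if "cs \<in> Cs" for cs
    using assms(1) assms(3)[OF that] sym_group_ord_cycle_of_list[of cs n]
      permutes_subset[OF cycle_permutes, of cs "{1..n}"]
    by (simp add: sym_group_carrier)
  then have "cycle_of_list ` Cs \<subseteq> ?P"
    by blast
  moreover have "finite ?P"
    using finite_carrier_sym_group by simp
  ultimately have "card (cycle_of_list ` Cs) \<le> card ?P"
    by (rule card_mono[rotated])
  then show ?thesis
    by (simp add: card_image[OF assms(2)])
qed

lemma three_le_card_sym_group_elements_of_order_2:
  assumes "3 \<le> n"
  shows "3 \<le> card {x \<in> carrier (sym_group n). group.ord (sym_group n) x = 2}"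
proof -
  let ?Cs = "{[1 :: nat, 2], [1, 3], [2, 3]}"
  have "inj_on cycle_of_list ?Cs"
    by (simp add: fun_eq_iff) (intro conjI exI[of _ 3]; simp)
  moreover have "cycle cs \<and> length cs = 2 \<and> set cs \<subseteq> {1..n}" if "cs \<in> ?Cs" for cs
    using that assms by auto
  ultimately have "card ?Cs \<le> card {x \<in> carrier (sym_group n). group.ord (sym_group n) x = 2}"
    by (rule card_le_card_sym_group_elements_of_order[OF two_is_prime_nat])
  then show ?thesis
    by simp
qed

lemma three_le_card_sym_group_elements_of_order_3:
  assumes "4 \<le> n"
  shows "3 \<le> card {x \<in> carrier (sym_group n). group.ord (sym_group n) x = 3}"
proof -
  let ?Cs = "{[1 :: nat, 2, 3], [1, 3, 2], [1, 2, 4]}"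
  have "prime (3 :: nat)"
    by simp
  moreover have "inj_on cycle_of_list ?Cs"
    by (simp add: fun_eq_iff) (intro conjI exI[of _ 2] exI[of _ 3]; simp)
  moreover have "cycle cs \<and> length cs = 3 \<and> set cs \<subseteq> {1..n}" if "cs \<in> ?Cs" for cs
    using that assms by auto
  ultimately have "card ?Cs \<le> card {x \<in> carrier (sym_group n). group.ord (sym_group n) x = 3}"
    by (rule card_le_card_sym_group_elements_of_order)
  then show ?thesis
    by simp
qed

lemma card_sym_group_le_6:
  assumes "n < 4"
  shows "card (carrier (sym_group n)) \<le> 6"
proof -
  have "card (carrier (sym_group n)) = fact n"
    by (rule sym_group_card_carrier)
  also have "\<dots> \<le> fact 3"
    using assms by (intro fact_mono) simp
  also have "\<dots> = (6 :: nat)"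
    by (simp add: numeral_3_eq_3)
  finally show ?thesis .
qed

theorem mainTheorem6:
  fixes n :: nat
  assumes "n \<ge> 1"
  shows "cyclically_separable (carrier (sym_group n)) (order_supergraph_adj (sym_group n))
           \<longleftrightarrow> n \<ge> 4"
proof
  show "4 \<le> n" if "cyclically_separable (carrier (sym_group n)) (order_supergraph_adj (sym_group n))"
    using that order_supergraph_not_cyclically_separable[OF sym_group_is_group finite_carrier_sym_group
        card_sym_group_le_6]
    by (meson not_le)
next
  assume "4 \<le> n"
  then show "cyclically_separable (carrier (sym_group n)) (order_supergraph_adj (sym_group n))"
    by (intro order_supergraph_cyclically_separable[OF sym_group_is_group, of 2 3]
        three_le_card_sym_group_elements_of_order_2 three_le_card_sym_group_elements_of_order_3)
      auto
qed

end
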